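(* Let $a\ge2$ and $0\le\mu\le a-1$ be integers, $n\ge0$ an integer, and $u\in\mathbb R$. Let $F(n,t)=\dfrac{n!^a}{\Gamma^{a-1}(t+1)\Gamma^a(n-t+1)}$, $$I_{n,\mu}(u)=\frac1{2\pi i}\int_L F(n,t)\Bigl(\frac{\pi}{\sin\pi t}\Bigr)^{\mu+1}e^{i\pi tu}\,dt,$$ where $L$ is a loop beginning and ending at $-\infty$ and encircling the points $n,n-1,n-2,\ldots$ once in the positive direction, and $$\widetilde I_{n,\mu}(u)=\sum_{k=0}^n\operatorname{res}_{t=k}\Bigl(F(n,t)\Bigl(\frac{\pi}{\sin\pi t}\Bigr)^{\mu+1}e^{i\pi tu}\Bigr).$$ Then $\widetilde I_{n,\mu}(u)=I_{n,\mu}(u)$ if $0\le\mu\le a-2$, and $\widetilde I_{n,a-1}(u)=I_{n,a-1}(u)+O(n^{-a})$ where the constant in $O$ is absolute. *)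

theory Defs
  imports "HOL-Complex_Analysis.Complex_Analysis" "HOL-Analysis.Gamma_Function"
begin

text \<open>F(n,t) = n!^a / (Gamma(t+1)^(a-1) Gamma(n-t+1)^a), written with the
  reciprocal Gamma function rGamma = 1/Gamma (entire).\<close>
definition FF :: "nat \<Rightarrow> nat \<Rightarrow> complex \<Rightarrow> complex" where
  "FF a n t = (fact n) ^ a * rGamma (t + 1) ^ (a - 1) * rGamma (of_nat n - t + 1) ^ a"

definition integrand :: "nat \<Rightarrow> nat \<Rightarrow> nat \<Rightarrow> real \<Rightarrow> complex \<Rightarrow> complex" where
  "integrand a mu n u t =
     FF a n t * (of_real pi / sin (of_real pi * t)) ^ (mu + 1) * exp (\<i> * of_real pi * t * of_real u)"

text \<open>Truncation at Re t = -R of the loop L: from -R - i along Im t = -1 to n + 1/2 - i,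
  up to n + 1/2 + i, and back along Im t = 1 to -R + i (positive orientation
  around n, n-1, n-2, ...).\<close>
definition loop_trunc :: "nat \<Rightarrow> real \<Rightarrow> real \<Rightarrow> complex" where
  "loop_trunc n R =
     linepath (Complex (-R) (-1)) (Complex (real n + 1/2) (-1)) +++
     linepath (Complex (real n + 1/2) (-1)) (Complex (real n + 1/2) 1) +++
     linepath (Complex (real n + 1/2) 1) (Complex (-R) 1)"

definition I_loop :: "nat \<Rightarrow> nat \<Rightarrow> nat \<Rightarrow> real \<Rightarrow> complex" where
  "I_loop a mu n u =
     Lim at_top (\<lambda>R::real. contour_integral (loop_trunc n R) (integrand a mu n u) / (2 * of_real pi * \<i>))"

definition I_tilde :: "nat \<Rightarrow> nat \<Rightarrow> nat \<Rightarrow> real \<Rightarrow> complex" where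
  "I_tilde a mu n u = (\<Sum>k = 0..n. residue (integrand a mu n u) (of_nat k))"

end

(*
  Closing the truncated loop by the segment Re t = -(m + 1/2) gives a rectangle on which the
  residue theorem applies: the contour integral picks up the residues at 0, ..., n and at
  -1, ..., -m.  To the left the integrand decays, because rGamma (n - t + 1) is dominated by
  rGamma (-t), which tends to 0 along the strip |Im t| <= 1, while |sin (pi t)| >= 1 on the
  remaining edges; hence I equals I_tilde plus the sum of the residues at the negative integers.
  There the reflection formula rGamma (t + 1) = - sin (pi t) / pi * Gamma (-t) shows that the
  zeros of order a - 1 of rGamma (t + 1) ^ (a - 1) cancel the poles of order mu + 1 of
  (pi / sin (pi t)) ^ (mu + 1) when mu <= a - 2, while for mu = a - 1 the poles are simple,
  with residues of modulus n!^a k!^(a-1) / (n+k+1)!^a <= n^(-a) / k!, whose sum is at most e n^(-a).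
*)

theory Submission
  imports Defs
begin

lemma mult_fact_mult_fact_le_fact: "n * fact n * fact k \<le> (fact (n + Suc k) :: nat)"
proof -
  have "n * fact n * fact k \<le> fact (Suc n) * fact k" by simp
  also have "\<dots> \<le> fact (Suc n + k)" by (rule dvd_imp_le[OF fact_fact_dvd_fact]) simp
  finally show ?thesis by simp
qed

lemma filterlim_nat_floor_minus: "filterlim (\<lambda>x::real. nat \<lfloor>x - c\<rfloor>) sequentially at_top"
  unfolding filterlim_at_top eventually_at_top_linorder
proof
  fix Z :: nat
  have "Z \<le> nat \<lfloor>x - c\<rfloor>" if "real Z + c \<le> x" for x
    using that by (simp add: le_nat_iff le_floor_iff)
  thus "\<exists>N::real. \<forall>x\<ge>N. Z \<le> nat \<lfloor>x - c\<rfloor>" by blast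
qed

lemma summable_norm_suminf_le_exp_1:
  fixes r :: "nat \<Rightarrow> 'a::banach"
  assumes r_le: "\<And>k. norm (r k) \<le> C / fact k"
  shows "summable r" "norm (suminf r) \<le> C * exp 1"
proof -
  have g: "(\<lambda>k. C / fact k) sums (C * exp 1)"
    using sums_mult[OF exp_converges[of "1::real"], of C] by (simp add: divide_inverse)
  have "summable (\<lambda>k. norm (r k))"
    using r_le by (intro summable_norm_comparison_test[OF _ sums_summable[OF g]]) blast
  thus "summable r" by (rule summable_norm_cancel)
  have "norm (suminf r) \<le> (\<Sum>k. norm (r k))" by (rule summable_norm) fact
  also have "\<dots> \<le> (\<Sum>k. C / fact k)" by (rule suminf_le[OF r_le]) (fact, rule sums_summable[OF g])
  also have "\<dots> = C * exp 1" using g by (simp add: sums_iff)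
  finally show "norm (suminf r) \<le> C * exp 1" .
qed

section \<open>Integer points and the size of \<open>sin (pi t)\<close>\<close>

lemma sin_pi_times_eq_0_iff: "sin (of_real pi * t) = 0 \<longleftrightarrow> (t::complex) \<in> \<int>"
proof
  assume "sin (of_real pi * t) = 0"
  then obtain k :: int where "of_real pi * t = of_real (k * pi)" by (auto simp: sin_eq_0)
  thus "t \<in> \<int>" by (simp add: mult.commute)
next
  assume "t \<in> \<int>"
  then obtain k :: int where "t = of_int k" by (auto elim: Ints_cases)
  thus "sin (of_real pi * t) = 0" by (simp only: sin_eq_0) (auto simp: mult.commute)
qed

lemma closed_segment_horizontal_disjoint_Ints:
  fixes x y :: complex
  assumes "Im x = c" "Im y = c" "c \<noteq> 0"
  shows "closed_segment x y \<inter> \<int> = {}"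
  using assms by (auto simp: closed_segment_same_Im elim!: Ints_cases)

lemma of_int_neq_half_integer: "(of_int i :: real) \<noteq> of_int j + 1/2"
proof
  assume "(of_int i :: real) = of_int j + 1/2"
  hence "of_int (2 * i) = (of_int (2 * j + 1) :: real)" by simp
  hence "2 * i = 2 * j + 1" by (simp only: of_int_eq_iff)
  thus False by presburger
qed

lemma closed_segment_vertical_disjoint_Ints:
  fixes x y :: complex
  assumes "Re x = of_int j + 1/2" "Re y = Re x"
  shows "closed_segment x y \<inter> \<int> = {}"
  using assms of_int_neq_half_integer by (auto simp: closed_segment_same_Re elim!: Ints_cases)

lemma one_le_norm_sin_pi_times_half_integer:
  fixes t :: complex
  assumes "Re t = of_int j + 1/2"
  shows "1 \<le> norm (sin (of_real pi * t))"
proof -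
  define E where "E = exp (2 * Im (of_real pi * t))"
  have "cos (2 * Re (of_real pi * t)) = cos (2 * pi * of_int j + pi)"
    using assms by (simp add: algebra_simps)
  also have "\<dots> = -1" by (simp add: cos_add)
  finally have eq: "norm (sin (of_real pi * t)) ^ 2 = (E + inverse E + 2) / 4"
    by (simp add: norm_sin_squared E_def)
  moreover have "2 \<le> E + inverse E"
  proof -
    have "0 < E" by (simp add: E_def)
    moreover have "0 \<le> (E - 1)\<^sup>2" by simp
    ultimately show ?thesis by (simp add: field_simps power2_eq_square)
  qed
  ultimately have "1 \<le> norm (sin (of_real pi * t)) ^ 2" unfolding eq by (simp add: field_simps)
  thus ?thesis using power2_le_imp_le[of 1 "norm (sin (of_real pi * t))"] by simp
qed

lemma one_le_norm_sin_pi_times_Im: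
  fixes t :: complex
  assumes "1 \<le> \<bar>Im t\<bar>"
  shows "1 \<le> norm (sin (of_real pi * t))"
proof -
  define y where "y = 2 * Im (of_real pi * t)"
  define A where "A = exp y + inverse (exp y)"
  define c where "c = cos (2 * Re (of_real pi * t))"
  have "2 * pi * 1 \<le> 2 * pi * \<bar>Im t\<bar>" using assms by (intro mult_left_mono) auto
  moreover have "\<bar>y\<bar> = 2 * pi * \<bar>Im t\<bar>" by (simp add: y_def abs_mult)
  ultimately have "6 \<le> \<bar>y\<bar>" using pi_gt3 by linarith
  hence "7 \<le> exp \<bar>y\<bar>" using exp_ge_add_one_self[of "\<bar>y\<bar>"] by linarith
  also have "exp \<bar>y\<bar> \<le> A"
  proof (cases "0 \<le> y")
    case True
    thus ?thesis by (simp add: A_def)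
  next
    case False
    hence "exp \<bar>y\<bar> = inverse (exp y)" by (simp add: exp_minus)
    thus ?thesis by (simp add: A_def)
  qed
  finally have "7 \<le> A" .
  moreover have eq: "norm (sin (of_real pi * t)) ^ 2 = (A - 2 * c) / 4"
    unfolding y_def A_def c_def by (rule norm_sin_squared)
  moreover have "c \<le> 1" by (simp add: c_def)
  ultimately have "1 \<le> norm (sin (of_real pi * t)) ^ 2" unfolding eq by (simp add: field_simps)
  thus ?thesis using power2_le_imp_le[of 1 "norm (sin (of_real pi * t))"] by simp
qed

section \<open>Decay of the integrand to the left\<close>

lemma fact_le_norm_pochhammer:
  fixes w :: complex
  assumes "1 \<le> Re w"
  shows "fact m \<le> norm (pochhammer w m)"
proof -
  have "(fact m :: real) = (\<Prod>i\<in>{0..<m}. real (Suc i))" by (simp add: fact_prod_Suc)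
  also have "\<dots> \<le> (\<Prod>i\<in>{0..<m}. norm (w + of_nat i))"
  proof (rule prod_mono)
    fix i assume "i \<in> {0..<m}"
    have "real (Suc i) \<le> Re (w + of_nat i)" using assms by simp
    also have "\<dots> \<le> norm (w + of_nat i)" by (rule complex_Re_le_cmod)
    finally show "0 \<le> real (Suc i) \<and> real (Suc i) \<le> norm (w + of_nat i)" by simp
  qed
  also have "\<dots> = norm (pochhammer w m)" by (simp add: pochhammer_prod prod_norm)
  finally show ?thesis .
qed

lemma norm_rGamma_add_nat_le:
  fixes w :: complex
  assumes "1 \<le> Re w"
  shows "fact m * norm (rGamma (w + of_nat m)) \<le> norm (rGamma w)"
proof -
  have "fact m * norm (rGamma (w + of_nat m)) \<le> norm (pochhammer w m) * norm (rGamma (w + of_nat m))"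
    using fact_le_norm_pochhammer[OF assms] by (intro mult_right_mono) auto
  also have "\<dots> = norm (rGamma w)" by (simp add: pochhammer_rGamma[of w m] norm_mult)
  finally show ?thesis .
qed

lemma rGamma_small_in_strip:
  fixes b e :: real
  assumes "0 < e"
  shows "\<exists>X. \<forall>z::complex. X \<le> Re z \<longrightarrow> \<bar>Im z\<bar> \<le> b \<longrightarrow> norm (rGamma z) \<le> e"
proof -
  define K where "K = cbox (Complex 1 (-b)) (Complex 2 b)"
  have "bounded (rGamma ` K)"
    unfolding K_def by (intro compact_imp_bounded compact_continuous_image continuous_on_rGamma compact_cbox)
  then obtain M where "0 < M" and M: "\<And>w. w \<in> K \<Longrightarrow> norm (rGamma w) \<le> M"
    unfolding bounded_pos by fastforce
  show ?thesis
  proof (intro exI[of _ "M / e + 3"] allI impI)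
    fix z :: complex assume z: "M / e + 3 \<le> Re z" "\<bar>Im z\<bar> \<le> b"
    have "0 \<le> M / e" using \<open>0 < M\<close> assms by simp
    have "3 \<le> \<lfloor>Re z\<rfloor>" using z \<open>0 \<le> M / e\<close> by (simp add: le_floor_iff)
    define m where "m = nat (\<lfloor>Re z\<rfloor> - 1)"
    define w where "w = z - of_nat m"
    have m: "real m = of_int \<lfloor>Re z\<rfloor> - 1" using \<open>3 \<le> \<lfloor>Re z\<rfloor>\<close> by (simp add: m_def)
    have fl: "of_int \<lfloor>Re z\<rfloor> \<le> Re z" "Re z < of_int \<lfloor>Re z\<rfloor> + 1" by linarith+
    have "Re w = Re z - real m" "Im w = Im z" by (simp_all add: w_def)
    hence "1 \<le> Re w" "Re w \<le> 2" using fl m by linarith+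
    hence "w \<in> K" using z(2) \<open>Im w = Im z\<close> by (auto simp: K_def in_cbox_complex_iff abs_le_iff)
    have "real m \<le> fact m" by (metis fact_ge_self of_nat_fact of_nat_le_iff)
    hence "norm (rGamma z) * real m \<le> fact m * norm (rGamma z)"
      by (subst mult.commute) (intro mult_right_mono; simp)
    also have "\<dots> \<le> norm (rGamma w)"
      using norm_rGamma_add_nat_le[OF \<open>1 \<le> Re w\<close>, of m] unfolding w_def by simp
    also have "\<dots> \<le> M" using M \<open>w \<in> K\<close> by blast
    also have "M \<le> e * real m"
    proof -
      have "M / e \<le> real m" using z m fl by linarith
      thus ?thesis using assms by (simp add: pos_divide_le_eq mult.commute)
    qed
    finally show "norm (rGamma z) \<le> e"
      by (rule mult_right_le_imp_le) (use m \<open>3 \<le> \<lfloor>Re z\<rfloor>\<close> in linarith)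
  qed
qed

lemma rGamma_add_one_times_rGamma_minus:
  fixes t :: complex
  shows "rGamma (t + 1) * rGamma (- t) = - sin (of_real pi * t) / of_real pi"
  using rGamma_reflection_complex[of "- t"] by (simp add: mult.commute add.commute)

lemma norm_FF_le:
  fixes t :: complex
  assumes "1 \<le> a" "Re t \<le> -1" "\<bar>Im t\<bar> \<le> 1"
  shows "norm (FF a n t) \<le> fact n ^ a * exp pi ^ (a - 1) * norm (rGamma (- t))"
proof -
  define r where "r = norm (rGamma (- t))"
  have shift: "norm (rGamma (of_nat n - t + 1)) \<le> r"
  proof -
    have "1 * norm (rGamma (- t + of_nat (Suc n))) \<le> fact (Suc n) * norm (rGamma (- t + of_nat (Suc n)))"
      by (intro mult_right_mono fact_ge_1) auto
    also have "\<dots> \<le> r" unfolding r_def using assms(2) by (intro norm_rGamma_add_nat_le) simp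
    finally show ?thesis by (simp add: algebra_simps)
  qed
  have "norm (rGamma (t + 1)) * r = norm (sin (of_real pi * t)) / pi"
    using arg_cong[OF rGamma_add_one_times_rGamma_minus[of t], of norm]
    by (simp add: r_def norm_mult norm_divide)
  also have "\<dots> \<le> exp pi / 1"
  proof (intro frac_le)
    have "norm (sin (of_real pi * t)) \<le> exp \<bar>Im (of_real pi * t)\<bar>"
      using cmod_sin_le_exp[of 1 "of_real pi * t"] by simp
    also have "\<dots> \<le> exp pi" using assms(3) by (simp add: abs_mult mult_le_cancel_left1)
    finally show "norm (sin (of_real pi * t)) \<le> exp pi" .
  qed (use pi_gt3 in auto)
  finally have refl: "norm (rGamma (t + 1)) * r \<le> exp pi" by simp
  have "norm (FF a n t) = fact n ^ a * norm (rGamma (t + 1)) ^ (a - 1) * norm (rGamma (of_nat n - t + 1)) ^ a"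
    by (simp add: FF_def norm_mult norm_power norm_fact)
  also have "\<dots> \<le> fact n ^ a * norm (rGamma (t + 1)) ^ (a - 1) * r ^ a"
    using shift by (intro mult_left_mono power_mono) auto
  also have "\<dots> = fact n ^ a * (norm (rGamma (t + 1)) * r) ^ (a - 1) * r"
    using assms(1) by (simp add: power_mult_distrib flip: power_Suc2)
  also have "\<dots> \<le> fact n ^ a * exp pi ^ (a - 1) * r"
    using refl by (intro mult_right_mono mult_left_mono power_mono) (auto simp: r_def)
  finally show ?thesis by (simp add: r_def)
qed

lemma norm_integrand_le_rGamma:
  fixes t :: complex
  assumes "1 \<le> a" "Re t \<le> -1" "\<bar>Im t\<bar> \<le> 1" "1 \<le> norm (sin (of_real pi * t))"
  shows "norm (integrand a mu n u t)
           \<le> fact n ^ a * exp pi ^ (a - 1) * pi ^ (mu + 1) * exp (pi * \<bar>u\<bar>) * norm (rGamma (- t))"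
proof -
  have P: "norm ((of_real pi / sin (of_real pi * t)) ^ (mu + 1)) \<le> pi ^ (mu + 1)"
  proof -
    have "pi / norm (sin (of_real pi * t)) \<le> pi / 1"
      using assms(4) pi_gt3 by (intro divide_left_mono) auto
    thus ?thesis unfolding norm_power by (intro power_mono) (auto simp: norm_divide)
  qed
  have E: "norm (exp (\<i> * of_real pi * t * of_real u)) \<le> exp (pi * \<bar>u\<bar>)"
  proof -
    have "- (u * Im t) \<le> \<bar>u\<bar>"
      using assms(3) abs_mult[of u "Im t"] mult_left_le[of "\<bar>Im t\<bar>" "\<bar>u\<bar>"] by (simp; linarith)
    hence "pi * - (u * Im t) \<le> pi * \<bar>u\<bar>" by (intro mult_left_mono) auto
    thus ?thesis by (simp add: algebra_simps)
  qed
  have "norm (integrand a mu n u t) = norm (FF a n t) * norm ((of_real pi / sin (of_real pi * t)) ^ (mu + 1))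
                                      * norm (exp (\<i> * of_real pi * t * of_real u))"
    by (simp only: integrand_def norm_mult)
  also have "\<dots> \<le> (fact n ^ a * exp pi ^ (a - 1) * norm (rGamma (- t))) * pi ^ (mu + 1) * exp (pi * \<bar>u\<bar>)"
    using norm_FF_le[OF assms(1-3)] P E by (intro mult_mono) auto
  finally show ?thesis by (simp add: mult_ac)
qed

lemma integrand_small_far_left:
  assumes "1 \<le> a" "0 < e"
  shows "\<exists>X. \<forall>t. Re t \<le> -X \<longrightarrow> \<bar>Im t\<bar> \<le> 1 \<longrightarrow> 1 \<le> norm (sin (of_real pi * t))
            \<longrightarrow> norm (integrand a mu n u t) \<le> e"
proof -
  define K where "K = fact n ^ a * exp pi ^ (a - 1) * pi ^ (mu + 1) * exp (pi * \<bar>u\<bar>)"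
  have "0 < K" unfolding K_def by (intro mult_pos_pos) auto
  then obtain X where X: "\<And>z::complex. X \<le> Re z \<Longrightarrow> \<bar>Im z\<bar> \<le> 1 \<Longrightarrow> norm (rGamma z) \<le> e / K"
    using rGamma_small_in_strip[of "e / K" 1] assms(2) by auto
  show ?thesis
  proof (intro exI[of _ "max 1 X"] allI impI)
    fix t :: complex
    assume t: "Re t \<le> - max 1 X" "\<bar>Im t\<bar> \<le> 1" "1 \<le> norm (sin (of_real pi * t))"
    have "norm (integrand a mu n u t) \<le> K * norm (rGamma (- t))"
      using norm_integrand_le_rGamma[OF assms(1) _ t(2,3)] t(1) by (simp add: K_def)
    also have "\<dots> \<le> K * (e / K)" using t \<open>0 < K\<close> by (intro mult_left_mono X) auto
    finally show "norm (integrand a mu n u t) \<le> e" using \<open>0 < K\<close> by simp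
  qed
qed

section \<open>Residues at the negative integers\<close>

lemma eventually_at_neg_nat:
  "eventually (\<lambda>t. Re t < 0 \<and> t \<notin> \<int>) (at (- of_nat (Suc k) :: complex))"
proof -
  define z :: complex where "z = - of_nat (Suc k)"
  have "eventually (\<lambda>t. t \<in> ball z 1 \<and> t \<noteq> z \<and> t \<in> UNIV) (at z within UNIV)"
    by (rule eventually_at_ball') simp
  hence "eventually (\<lambda>t. Re t < 0 \<and> t \<notin> \<int>) (at z)"
  proof (rule eventually_mono)
    fix t assume t: "t \<in> ball z 1 \<and> t \<noteq> z \<and> t \<in> UNIV"
    hence close: "norm (t - z) < 1" by (simp add: dist_norm norm_minus_commute)
    hence "Re t < 0" using abs_Re_le_cmod[of "t - z"] by (simp add: z_def)
    moreover have "t \<notin> \<int>"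
    proof
      assume "t \<in> \<int>"
      then obtain j :: int where j: "t = of_int j" by (elim Ints_cases)
      have "t - z = of_int (j + int (Suc k))" by (simp add: j z_def)
      hence "\<bar>real_of_int (j + int (Suc k))\<bar> < 1" using close by (metis norm_of_int)
      hence "j = - int (Suc k)" by linarith
      hence "t = z" by (simp add: j z_def)
      thus False using t by simp
    qed
    ultimately show "Re t < 0 \<and> t \<notin> \<int>" by simp
  qed
  thus ?thesis by (simp add: z_def)
qed

text \<open>On \<open>Re t < 0\<close> the reflection formula \<open>rGamma (t + 1) = - sin (pi t) / pi * Gamma (- t)\<close>
  factors the integrand as \<open>integrand_left t * (sin (pi t) / pi) ^ (a - 2 - mu)\<close>, with the
  holomorphic factor below; so the negative integers are removable singularities for
  \<open>mu \<le> a - 2\<close> and simple poles for \<open>mu = a - 1\<close>.\<close>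
definition integrand_left :: "nat \<Rightarrow> nat \<Rightarrow> real \<Rightarrow> complex \<Rightarrow> complex" where
  "integrand_left a n u t = (-1) ^ (a - 1) * fact n ^ a * Gamma (- t) ^ (a - 1)
     * rGamma (of_nat n - t + 1) ^ a * exp (\<i> * of_real pi * t * of_real u)"

lemma integrand_left_holomorphic: "integrand_left a n u holomorphic_on {t. Re t < 0}"
  unfolding integrand_left_def by (intro holomorphic_intros) (auto elim!: nonpos_Ints_cases')

lemma integrand_eq_integrand_left:
  fixes t :: complex
  assumes "Re t < 0" "t \<notin> \<int>"
  shows "integrand a mu n u t * (sin (of_real pi * t) / of_real pi) ^ (mu + 1)
           = integrand_left a n u t * (sin (of_real pi * t) / of_real pi) ^ (a - 1)"
proof -
  define s where "s = sin (of_real pi * t) / of_real pi"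
  have inv: "of_real pi / sin (of_real pi * t) * s = 1"
    using assms(2) by (simp add: s_def sin_pi_times_eq_0_iff)
  have "- t \<notin> \<int>\<^sub>\<le>\<^sub>0" using assms(1) by (auto elim!: nonpos_Ints_cases')
  hence "Gamma (- t) * rGamma (- t) = 1" by (simp add: rGamma_inverse_Gamma Gamma_eq_zero_iff)
  hence "rGamma (t + 1) = (rGamma (t + 1) * rGamma (- t)) * Gamma (- t)"
    by (simp add: algebra_simps)
  also have "\<dots> = - s * Gamma (- t)"
    by (simp add: rGamma_add_one_times_rGamma_minus s_def)
  also have "\<dots> = (-1) * s * Gamma (- t)" by simp
  finally have "rGamma (t + 1) ^ (a - 1) = (-1) ^ (a - 1) * s ^ (a - 1) * Gamma (- t) ^ (a - 1)"
    by (simp only: power_mult_distrib)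
  hence FF: "FF a n t = (-1) ^ (a - 1) * fact n ^ a * Gamma (- t) ^ (a - 1)
               * rGamma (of_nat n - t + 1) ^ a * s ^ (a - 1)"
    unfolding FF_def by (simp only: mult_ac)
  have "integrand a mu n u t * s ^ (mu + 1)
          = FF a n t * exp (\<i> * of_real pi * t * of_real u) * (of_real pi / sin (of_real pi * t) * s) ^ (mu + 1)"
    unfolding integrand_def power_mult_distrib by (simp only: mult_ac)
  also have "\<dots> = integrand_left a n u t * s ^ (a - 1)"
    unfolding inv power_one mult_1_right FF integrand_left_def by (simp only: mult_ac)
  finally show ?thesis by (simp add: s_def)
qed

lemma residue_integrand_neg_nat_eq_0:
  assumes "mu + 2 \<le> a"
  shows "residue (integrand a mu n u) (- of_nat (Suc k)) = 0"
proof -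
  define s where "s t = sin (of_real pi * t) / of_real pi" for t :: complex
  have "eventually (\<lambda>t. integrand a mu n u t = integrand_left a n u t * s t ^ (a - 2 - mu))
          (at (- of_nat (Suc k)))"
    using eventually_at_neg_nat
  proof (rule eventually_mono)
    fix t :: complex assume t: "Re t < 0 \<and> t \<notin> \<int>"
    hence "s t ^ (mu + 1) \<noteq> 0" by (simp add: s_def sin_pi_times_eq_0_iff)
    moreover have "integrand a mu n u t * s t ^ (mu + 1) = integrand_left a n u t * s t ^ (a - 1)"
      unfolding s_def using integrand_eq_integrand_left t by blast
    moreover have "s t ^ (a - 1) = s t ^ (a - 2 - mu) * s t ^ (mu + 1)"
    proof -
      have "a - 1 = (a - 2 - mu) + (mu + 1)" using assms by simp
      thus ?thesis by (metis power_add)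
    qed
    ultimately show "integrand a mu n u t = integrand_left a n u t * s t ^ (a - 2 - mu)"
      by (metis mult.assoc mult_right_cancel)
  qed
  hence "residue (integrand a mu n u) (- of_nat (Suc k))
           = residue (\<lambda>t. integrand_left a n u t * s t ^ (a - 2 - mu)) (- of_nat (Suc k))"
    by (rule residue_cong) simp
  also have "\<dots> = 0"
  proof (rule residue_holo[of "{t. Re t < 0}"])
    show "open {t::complex. Re t < 0}" by (intro open_Collect_less continuous_intros)
    show "(\<lambda>t. integrand_left a n u t * s t ^ (a - 2 - mu)) holomorphic_on {t. Re t < 0}"
      unfolding s_def by (intro holomorphic_intros integrand_left_holomorphic) auto
  qed simp
  finally show ?thesis .
qed

lemma norm_integrand_left_neg_nat:
  "norm (integrand_left a n u (- of_nat (Suc k))) = fact n ^ a * fact k ^ (a - 1) / fact (n + Suc k) ^ a"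
proof -
  define z :: complex where "z = - of_nat (Suc k)"
  have "Gamma (- z) = fact k"
    using Gamma_fact[of k] by (simp add: z_def add.commute)
  moreover have "rGamma (of_nat n - z + 1) = inverse (fact (n + Suc k))"
  proof -
    have "of_nat n - z + 1 = 1 + of_nat (n + Suc k)" by (simp add: z_def)
    thus ?thesis by (simp only: rGamma_inverse_Gamma Gamma_fact)
  qed
  moreover have "norm (exp (\<i> * of_real pi * z * of_real u)) = 1" by (simp add: z_def)
  ultimately have "norm (integrand_left a n u z) = fact n ^ a * fact k ^ (a - 1) / fact (n + Suc k) ^ a"
    unfolding integrand_left_def
    by (simp add: norm_mult norm_power norm_inverse norm_fact divide_inverse power_inverse
        power_mult_distrib inverse_mult_distrib del: of_nat_Suc fact_Suc)
  thus ?thesis by (simp add: z_def)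
qed

lemma residue_integrand_neg_nat:
  "residue (integrand a (a - 1) n u) (- of_nat (Suc k))
     = (-1) ^ Suc k * integrand_left a n u (- of_nat (Suc k))"
proof -
  define z :: complex where "z = - of_nat (Suc k)"
  define s where "s t = sin (of_real pi * t) / of_real pi" for t :: complex
  have cos: "cos (of_real pi * z) = (-1) ^ Suc k"
  proof -
    have "of_real pi * z = - (of_nat (Suc k) * of_real pi)" by (simp add: z_def algebra_simps)
    thus ?thesis by (simp only: cos_minus cos_npi_complex')
  qed
  have "eventually (\<lambda>t. integrand a (a - 1) n u t = integrand_left a n u t / s t) (at z)"
    using eventually_at_neg_nat[of k] unfolding z_def[symmetric]
  proof (rule eventually_mono)
    fix t :: complex assume t: "Re t < 0 \<and> t \<notin> \<int>"
    hence "s t \<noteq> 0" by (simp add: s_def sin_pi_times_eq_0_iff)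
    moreover have "(integrand a (a - 1) n u t * s t) * s t ^ (a - 1) = integrand_left a n u t * s t ^ (a - 1)"
      using integrand_eq_integrand_left[of t a "a - 1" n u] t by (simp add: s_def mult_ac)
    ultimately show "integrand a (a - 1) n u t = integrand_left a n u t / s t"
      using mult_right_cancel[of "s t ^ (a - 1)"] by (simp add: field_simps)
  qed
  hence "residue (integrand a (a - 1) n u) z = residue (\<lambda>t. integrand_left a n u t / s t) z"
    by (rule residue_cong) simp
  also have "\<dots> = integrand_left a n u z / cos (of_real pi * z)"
  proof (rule residue_simple_pole_deriv[where s = "{t. Re t < 0}"])
    show "open {t::complex. Re t < 0}" by (intro open_Collect_less continuous_intros)
    show "connected {t::complex. Re t < 0}" by (intro convex_connected convex_halfspace_Re_lt)
    show "(s has_field_derivative cos (of_real pi * z)) (at z)"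
      unfolding s_def by (auto intro!: derivative_eq_intros)
    have "0 < norm (integrand_left a n u z)"
      unfolding z_def norm_integrand_left_neg_nat by simp
    thus "integrand_left a n u z \<noteq> 0" by auto
    show "cos (of_real pi * z) \<noteq> 0" by (simp add: cos)
    show "s z = 0" by (simp add: s_def z_def sin_pi_times_eq_0_iff)
    show "s holomorphic_on {t. Re t < 0}" unfolding s_def by (intro holomorphic_intros) auto
  qed (auto simp: z_def intro: integrand_left_holomorphic)
  also have "\<dots> = (-1) ^ Suc k * integrand_left a n u z"
    by (simp add: cos divide_simps)
  finally show ?thesis by (simp only: z_def)
qed

lemma norm_residue_integrand_neg_nat_le:
  assumes "1 \<le> a" "1 \<le> n"
  shows "norm (residue (integrand a (a - 1) n u) (- of_nat (Suc k))) \<le> (1 / real n) ^ a / fact k"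
proof -
  obtain b where a: "a = Suc b" using assms(1) by (cases a) auto
  define q :: real where "q = fact n * fact k / fact (n + Suc k)"
  have "real n * (fact n * fact k) \<le> fact (n + Suc k)"
    using mult_fact_mult_fact_le_fact[of n k] unfolding of_nat_le_iff[symmetric, where 'a=real]
    by (simp only: of_nat_mult of_nat_fact mult.assoc)
  hence "fact n * fact k \<le> fact (n + Suc k) / real n"
    using assms(2) by (simp add: pos_le_divide_eq mult.commute del: fact_Suc)
  hence "q \<le> 1 / real n" unfolding q_def by (simp add: pos_divide_le_eq del: fact_Suc)
  have "norm (residue (integrand a (a - 1) n u) (- of_nat (Suc k)))
          = fact n ^ a * fact k ^ (a - 1) / fact (n + Suc k) ^ a"
    unfolding residue_integrand_neg_nat norm_mult norm_power norm_integrand_left_neg_nat by simp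
  also have "\<dots> = q ^ a / fact k" by (simp add: a q_def power_divide power_mult_distrib)
  also have "\<dots> \<le> (1 / real n) ^ a / fact k"
    using \<open>q \<le> 1 / real n\<close> by (intro divide_right_mono power_mono) (auto simp: q_def)
  finally show ?thesis .
qed

section \<open>The truncated loop and the residue theorem\<close>

lemma integrand_holomorphic: "integrand a mu n u holomorphic_on - \<int>"
  unfolding integrand_def FF_def by (intro holomorphic_intros) (auto simp: sin_pi_times_eq_0_iff)

lemma continuous_on_integrand: "S \<inter> \<int> = {} \<Longrightarrow> continuous_on S (integrand a mu n u)"
  by (rule continuous_on_subset[OF holomorphic_on_imp_continuous_on[OF integrand_holomorphic]]) auto

lemma contour_integrable_integrand_linepath:
  "closed_segment x y \<inter> \<int> = {} \<Longrightarrow> integrand a mu n u contour_integrable_on linepath x y"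
  by (intro contour_integrable_continuous_linepath continuous_on_integrand)

lemma contour_integral_loop_trunc:
  "contour_integral (loop_trunc n R) (integrand a mu n u) =
     contour_integral (linepath (Complex (-R) (-1)) (Complex (real n + 1/2) (-1))) (integrand a mu n u)
   + contour_integral (linepath (Complex (real n + 1/2) (-1)) (Complex (real n + 1/2) 1)) (integrand a mu n u)
   + contour_integral (linepath (Complex (real n + 1/2) 1) (Complex (-R) 1)) (integrand a mu n u)"
proof -
  have "integrand a mu n u contour_integrable_on linepath (Complex (-R) (-1)) (Complex (real n + 1/2) (-1))"
    by (intro contour_integrable_integrand_linepath closed_segment_horizontal_disjoint_Ints[of _ "-1"]) simp_all
  moreover have "integrand a mu n u contour_integrable_on linepath (Complex (real n + 1/2) 1) (Complex (-R) 1)"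
    by (intro contour_integrable_integrand_linepath closed_segment_horizontal_disjoint_Ints[of _ 1]) simp_all
  moreover have "integrand a mu n u contour_integrable_on
                   linepath (Complex (real n + 1/2) (-1)) (Complex (real n + 1/2) 1)"
    by (intro contour_integrable_integrand_linepath closed_segment_vertical_disjoint_Ints[of _ "int n"]) simp_all
  ultimately show ?thesis by (simp add: loop_trunc_def add.assoc)
qed

lemma contour_integral_loop_trunc_shorten:
  assumes "0 \<le> R'" "R' \<le> R"
  shows "contour_integral (loop_trunc n R) (integrand a mu n u) =
           contour_integral (loop_trunc n R') (integrand a mu n u)
         + contour_integral (linepath (Complex (-R) (-1)) (Complex (-R') (-1))) (integrand a mu n u)
         + contour_integral (linepath (Complex (-R') 1) (Complex (-R) 1)) (integrand a mu n u)"
proof -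
  let ?f = "integrand a mu n u"
  have "contour_integral (linepath (Complex (-R) (-1)) (Complex (real n + 1/2) (-1))) ?f =
          contour_integral (linepath (Complex (-R) (-1)) (Complex (-R') (-1))) ?f
        + contour_integral (linepath (Complex (-R') (-1)) (Complex (real n + 1/2) (-1))) ?f"
    using assms
    by (intro contour_integral_split_linepath continuous_on_integrand closed_segment_horizontal_disjoint_Ints)
       (auto simp: closed_segment_same_Im closed_segment_eq_real_ivl)
  moreover have "contour_integral (linepath (Complex (real n + 1/2) 1) (Complex (-R) 1)) ?f =
          contour_integral (linepath (Complex (real n + 1/2) 1) (Complex (-R') 1)) ?f
        + contour_integral (linepath (Complex (-R') 1) (Complex (-R) 1)) ?f"
    using assms
    by (intro contour_integral_split_linepath continuous_on_integrand closed_segment_horizontal_disjoint_Ints)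
       (auto simp: closed_segment_same_Im closed_segment_eq_real_ivl)
  ultimately show ?thesis by (simp add: contour_integral_loop_trunc)
qed

lemma Ints_in_strip:
  fixes t :: complex
  assumes "t \<in> \<int>" "- real m - 1 < Re t" "Re t < real n + 1"
  shows "t \<in> of_nat ` {0..n} \<union> (\<lambda>k. - of_nat (Suc k)) ` {..<m}"
proof -
  obtain j :: int where j: "t = of_int j" using assms(1) by (elim Ints_cases)
  hence "- real m - 1 < of_int j" "of_int j < real n + 1" using assms(2,3) by simp_all
  hence "- int m \<le> j" "j \<le> int n" by linarith+
  show ?thesis
  proof (cases "0 \<le> j")
    case True
    hence "t = of_nat (nat j)" "nat j \<in> {0..n}" using j \<open>j \<le> int n\<close> by auto
    thus ?thesis by blast
  next
    case False
    hence "t = - of_nat (Suc (nat (- j) - 1))" "nat (- j) - 1 \<in> {..<m}"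
      using j \<open>- int m \<le> j\<close> by auto
    thus ?thesis by blast
  qed
qed

lemma contour_integral_rectpath_integrand:
  assumes "R = real m + 1/2"
  shows "contour_integral (rectpath (Complex (-R) (-1)) (Complex (real n + 1/2) 1)) (integrand a mu n u)
       = contour_integral (loop_trunc n R) (integrand a mu n u)
         + contour_integral (linepath (Complex (-R) 1) (Complex (-R) (-1))) (integrand a mu n u)"
proof -
  let ?f = "integrand a mu n u"
  have "?f contour_integrable_on linepath (Complex (-R) (-1)) (Complex (real n + 1/2) (-1))"
    by (intro contour_integrable_integrand_linepath closed_segment_horizontal_disjoint_Ints[of _ "-1"]) simp_all
  moreover have "?f contour_integrable_on linepath (Complex (real n + 1/2) (-1)) (Complex (real n + 1/2) 1)"
    by (intro contour_integrable_integrand_linepath closed_segment_vertical_disjoint_Ints[of _ "int n"]) simp_all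
  moreover have "?f contour_integrable_on linepath (Complex (real n + 1/2) 1) (Complex (-R) 1)"
    by (intro contour_integrable_integrand_linepath closed_segment_horizontal_disjoint_Ints[of _ 1]) simp_all
  moreover have "?f contour_integrable_on linepath (Complex (-R) 1) (Complex (-R) (-1))"
    by (intro contour_integrable_integrand_linepath closed_segment_vertical_disjoint_Ints[of _ "- int m - 1"])
       (simp_all add: assms)
  ultimately show ?thesis by (simp add: rectpath_def Let_def contour_integral_loop_trunc add.assoc)
qed

lemma contour_integral_loop_trunc_residues:
  assumes "R = real m + 1/2"
  shows "contour_integral (loop_trunc n R) (integrand a mu n u)
         + contour_integral (linepath (Complex (-R) 1) (Complex (-R) (-1))) (integrand a mu n u)
       = 2 * pi * \<i> * ((\<Sum>k=0..n. residue (integrand a mu n u) (of_nat k))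
                       + (\<Sum>k<m. residue (integrand a mu n u) (- of_nat (Suc k))))"
proof -
  let ?f = "integrand a mu n u"
  define A where "A = Complex (-R) (-1)"
  define B where "B = Complex (real n + 1/2) 1"
  define S where "S = box (Complex (-R - 1/4) (-2)) (Complex (real n + 3/4) 2)"
  define P where "P = (of_nat ` {0..n} :: complex set)"
  define Q where "Q = ((\<lambda>k. - of_nat (Suc k)) ` {..<m} :: complex set)"
  have AB: "Re A \<le> Re B" "Im A \<le> Im B" by (simp_all add: A_def B_def assms)
  have "cbox A B \<subseteq> S"
    by (auto simp: S_def A_def B_def in_cbox_complex_iff in_box_complex_iff)
  have poles_inside: "P \<union> Q \<subseteq> box A B"
    by (auto simp: P_def Q_def A_def B_def in_box_complex_iff assms)
  have poles: "S \<inter> \<int> \<subseteq> P \<union> Q"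
  proof
    fix t assume "t \<in> S \<inter> \<int>"
    thus "t \<in> P \<union> Q"
      unfolding P_def Q_def by (intro Ints_in_strip) (auto simp: S_def in_box_complex_iff assms)
  qed
  have "contour_integral (rectpath A B) ?f =
           2 * pi * \<i> * (\<Sum>p\<in>P \<union> Q. winding_number (rectpath A B) p * residue ?f p)"
  proof (intro Residue_theorem)
    show "open S" "connected S" unfolding S_def by (simp_all add: open_box convex_connected)
    show "path_image (rectpath A B) \<subseteq> S - (P \<union> Q)"
      using path_image_rectpath_cbox_minus_box[OF AB] \<open>cbox A B \<subseteq> S\<close> poles_inside by auto
    show "\<forall>z. z \<notin> S \<longrightarrow> winding_number (rectpath A B) z = 0"
      using \<open>cbox A B \<subseteq> S\<close> by (auto intro!: winding_number_rectpath_outside AB)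
  qed (use poles in \<open>auto simp: P_def Q_def intro: holomorphic_on_subset[OF integrand_holomorphic]\<close>)
  also have "(\<Sum>p\<in>P \<union> Q. winding_number (rectpath A B) p * residue ?f p) = (\<Sum>p\<in>P \<union> Q. residue ?f p)"
    using poles_inside by (intro sum.cong refl) (auto simp: winding_number_rectpath)
  also have "\<dots> = (\<Sum>p\<in>P. residue ?f p) + (\<Sum>p\<in>Q. residue ?f p)"
    by (rule sum.union_disjoint) (auto simp: P_def Q_def complex_eq_iff)
  also have "\<dots> = (\<Sum>k=0..n. residue ?f (of_nat k)) + (\<Sum>k<m. residue ?f (- of_nat (Suc k)))"
    unfolding P_def Q_def by (subst (1 2) sum.reindex) (auto simp: inj_on_def)
  finally show ?thesis
    using contour_integral_rectpath_integrand[OF assms, of n a mu u] by (simp add: A_def B_def)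
qed

section \<open>Removing the truncation\<close>

lemma norm_contour_integral_integrand_far_left_le:
  assumes "1 \<le> a" "0 < e"
  shows "\<exists>X. \<forall>x y. (\<forall>t\<in>closed_segment x y. Re t \<le> -X \<and> \<bar>Im t\<bar> \<le> 1 \<and> 1 \<le> norm (sin (of_real pi * t)))
           \<longrightarrow> norm (contour_integral (linepath x y) (integrand a mu n u)) \<le> e * norm (y - x)"
proof -
  obtain X where X: "\<And>t. Re t \<le> -X \<Longrightarrow> \<bar>Im t\<bar> \<le> 1 \<Longrightarrow> 1 \<le> norm (sin (of_real pi * t))
                          \<Longrightarrow> norm (integrand a mu n u t) \<le> e"
    using integrand_small_far_left[OF assms, of mu n u] by blast
  show ?thesis
  proof (intro exI[of _ X] allI impI)
    fix x y :: complex
    assume seg: "\<forall>t\<in>closed_segment x y. Re t \<le> -X \<and> \<bar>Im t\<bar> \<le> 1 \<and> 1 \<le> norm (sin (of_real pi * t))"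
    hence "closed_segment x y \<inter> \<int> = {}" by (force simp flip: sin_pi_times_eq_0_iff)
    hence "(integrand a mu n u has_contour_integral contour_integral (linepath x y) (integrand a mu n u))
             (linepath x y)"
      by (intro has_contour_integral_integral contour_integrable_integrand_linepath)
    thus "norm (contour_integral (linepath x y) (integrand a mu n u)) \<le> e * norm (y - x)"
      by (rule has_contour_integral_bound_linepath) (use seg X assms(2) in auto)
  qed
qed

lemma contour_integral_loop_trunc_eq_residues:
  assumes "1/2 \<le> R"
  defines "R' \<equiv> real (nat \<lfloor>R - 1/2\<rfloor>) + 1/2"
  shows "contour_integral (loop_trunc n R) (integrand a mu n u)
           - 2 * pi * \<i> * (I_tilde a mu n u
               + (\<Sum>k<nat \<lfloor>R - 1/2\<rfloor>. residue (integrand a mu n u) (- of_nat (Suc k))))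
         = contour_integral (linepath (Complex (-R) (-1)) (Complex (-R') (-1))) (integrand a mu n u)
           + contour_integral (linepath (Complex (-R') 1) (Complex (-R) 1)) (integrand a mu n u)
           - contour_integral (linepath (Complex (-R') 1) (Complex (-R') (-1))) (integrand a mu n u)"
proof -
  have "0 \<le> R'" "R' \<le> R" using assms(1) unfolding R'_def by linarith+
  hence "contour_integral (loop_trunc n R) (integrand a mu n u)
           = contour_integral (loop_trunc n R') (integrand a mu n u)
             + contour_integral (linepath (Complex (-R) (-1)) (Complex (-R') (-1))) (integrand a mu n u)
             + contour_integral (linepath (Complex (-R') 1) (Complex (-R) 1)) (integrand a mu n u)"
    by (rule contour_integral_loop_trunc_shorten)
  moreover have "contour_integral (loop_trunc n R') (integrand a mu n u)
      + contour_integral (linepath (Complex (-R') 1) (Complex (-R') (-1))) (integrand a mu n u)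
      = 2 * pi * \<i> * (I_tilde a mu n u
          + (\<Sum>k<nat \<lfloor>R - 1/2\<rfloor>. residue (integrand a mu n u) (- of_nat (Suc k))))"
    unfolding I_tilde_def by (rule contour_integral_loop_trunc_residues) (simp add: R'_def)
  ultimately show ?thesis by (simp add: algebra_simps)
qed

lemma loop_trunc_minus_residues_small:
  assumes "1 \<le> a" "0 < e"
  shows "\<exists>X. \<forall>R\<ge>X. norm (contour_integral (loop_trunc n R) (integrand a mu n u)
            - 2 * pi * \<i> * (I_tilde a mu n u
                + (\<Sum>k<nat \<lfloor>R - 1/2\<rfloor>. residue (integrand a mu n u) (- of_nat (Suc k))))) \<le> e"
proof -
  let ?I = "\<lambda>x y. contour_integral (linepath x y) (integrand a mu n u)"
  obtain X where X: "\<And>x y. \<forall>t\<in>closed_segment x y. Re t \<le> -X \<and> \<bar>Im t\<bar> \<le> 1 \<and> 1 \<le> norm (sin (of_real pi * t))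
                           \<Longrightarrow> norm (?I x y) \<le> e / 4 * norm (y - x)"
    using norm_contour_integral_integrand_far_left_le[OF assms(1), of "e / 4" mu n u] assms(2) by auto
  show ?thesis
  proof (intro exI[of _ "max X 0 + 2"] allI impI)
    fix R :: real assume R: "max X 0 + 2 \<le> R"
    define m where "m = nat \<lfloor>R - 1/2\<rfloor>"
    define R' where "R' = real m + 1/2"
    have "real m = of_int \<lfloor>R - 1/2\<rfloor>" using R by (simp add: m_def)
    hence R': "R - 1 < R'" "R' \<le> R" "X \<le> R'" using R unfolding R'_def by linarith+
    let ?lower = "?I (Complex (-R) (-1)) (Complex (-R') (-1))"
    let ?upper = "?I (Complex (-R') 1) (Complex (-R) 1)"
    let ?vertical = "?I (Complex (-R') 1) (Complex (-R') (-1))"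
    have "norm ?lower \<le> e / 4 * norm (Complex (-R') (-1) - Complex (-R) (-1))"
      using R' by (intro X) (auto simp: closed_segment_same_Im closed_segment_eq_real_ivl
          intro: one_le_norm_sin_pi_times_Im)
    moreover have "norm ?upper \<le> e / 4 * norm (Complex (-R) 1 - Complex (-R') 1)"
      using R' by (intro X) (auto simp: closed_segment_same_Im closed_segment_eq_real_ivl
          intro: one_le_norm_sin_pi_times_Im)
    moreover have "norm ?vertical \<le> e / 4 * norm (Complex (-R') (-1) - Complex (-R') 1)"
      using R' by (intro X) (auto simp: closed_segment_same_Re closed_segment_eq_real_ivl R'_def
          intro!: one_le_norm_sin_pi_times_half_integer[of _ "- int m - 1"])
    moreover have "norm (Complex (-R') (-1) - Complex (-R) (-1)) = R - R'"
      "norm (Complex (-R) 1 - Complex (-R') 1) = R - R'"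
      "norm (Complex (-R') (-1) - Complex (-R') 1) = 2"
      using R' by (simp_all add: norm_complex_def)
    moreover have "e / 4 * (R - R') \<le> e / 4" using R' assms(2) by (simp add: mult_left_le)
    moreover have "norm (?lower + ?upper - ?vertical) \<le> norm ?lower + norm ?upper + norm ?vertical"
      by (rule order_trans[OF norm_triangle_ineq4 add_right_mono[OF norm_triangle_ineq]])
    ultimately have "norm (?lower + ?upper - ?vertical) \<le> e" by simp
    thus "norm (contour_integral (loop_trunc n R) (integrand a mu n u)
            - 2 * pi * \<i> * (I_tilde a mu n u
                + (\<Sum>k<nat \<lfloor>R - 1/2\<rfloor>. residue (integrand a mu n u) (- of_nat (Suc k))))) \<le> e"
      using R contour_integral_loop_trunc_eq_residues[of R n a mu u] by (simp add: R'_def m_def)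
  qed
qed

lemma I_loop_eq_I_tilde_plus_residues:
  assumes "1 \<le> a" "summable (\<lambda>k. residue (integrand a mu n u) (- of_nat (Suc k)))"
  shows "I_loop a mu n u = I_tilde a mu n u + (\<Sum>k. residue (integrand a mu n u) (- of_nat (Suc k)))"
proof -
  define r where "r = (\<lambda>k. residue (integrand a mu n u) (- of_nat (Suc k)))"
  define c :: complex where "c = 2 * of_real pi * \<i>"
  define G where "G = (\<lambda>R. contour_integral (loop_trunc n R) (integrand a mu n u) / c)"
  define S where "S R = I_tilde a mu n u + (\<Sum>k<nat \<lfloor>R - 1/2\<rfloor>. r k)" for R :: real
  have "((\<lambda>R. G R - S R) \<longlongrightarrow> 0) at_top"
  proof (rule tendstoI)
    fix e :: real assume "0 < e"
    then obtain X where X: "\<And>R. R \<ge> X \<Longrightarrow> norm (G R * c - c * S R) \<le> pi * e"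
      using loop_trunc_minus_residues_small[OF assms(1), of "pi * e" n mu u]
      by (auto simp: G_def S_def r_def c_def)
    have "norm (G R - S R) < e" if "R \<ge> X" for R
    proof -
      have "G R * c - c * S R = (G R - S R) * c" by (simp add: algebra_simps)
      hence "norm (G R - S R) * (2 * pi) \<le> (e / 2) * (2 * pi)"
        using X[OF that] by (simp add: c_def norm_mult)
      hence "norm (G R - S R) \<le> e / 2" by (rule mult_right_le_imp_le) simp
      thus ?thesis using \<open>0 < e\<close> by simp
    qed
    thus "eventually (\<lambda>R. dist (G R - S R) 0 < e) at_top"
      unfolding eventually_at_top_linorder by (auto simp: dist_norm)
  qed
  moreover have "(S \<longlongrightarrow> I_tilde a mu n u + suminf r) at_top"
    unfolding S_def using assms(2)[folded r_def]
    by (intro tendsto_add tendsto_const filterlim_compose[OF summable_LIMSEQ filterlim_nat_floor_minus])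
  ultimately have "(G \<longlongrightarrow> I_tilde a mu n u + suminf r) at_top"
    by (rule Lim_transform[rotated])
  hence "Lim at_top G = I_tilde a mu n u + suminf r" by (intro tendsto_Lim) auto
  thus ?thesis unfolding I_loop_def G_def c_def r_def .
qed

lemma I_tilde_eq_I_loop:
  assumes "mu + 2 \<le> a"
  shows "I_tilde a mu n u = I_loop a mu n u"
proof -
  have "(\<lambda>k. residue (integrand a mu n u) (- of_nat (Suc k))) = (\<lambda>k. 0)"
    using residue_integrand_neg_nat_eq_0[OF assms] by (intro ext)
  thus ?thesis using I_loop_eq_I_tilde_plus_residues[of a mu n u] assms by simp
qed

lemma norm_I_tilde_minus_I_loop_le:
  assumes "1 \<le> a" "1 \<le> n"
  shows "norm (I_tilde a (a - 1) n u - I_loop a (a - 1) n u) \<le> exp 1 / real n ^ a"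
proof -
  define r where "r k = residue (integrand a (a - 1) n u) (- of_nat (Suc k))" for k
  have r_le: "norm (r k) \<le> (1 / real n) ^ a / fact k" for k
    unfolding r_def by (rule norm_residue_integrand_neg_nat_le[OF assms])
  have "I_loop a (a - 1) n u = I_tilde a (a - 1) n u + suminf r"
    unfolding r_def
    by (rule I_loop_eq_I_tilde_plus_residues[OF assms(1) summable_norm_suminf_le_exp_1(1)[OF r_le[unfolded r_def]]])
  hence "norm (I_tilde a (a - 1) n u - I_loop a (a - 1) n u) = norm (suminf r)"
    by (simp add: norm_minus_commute)
  also have "\<dots> \<le> (1 / real n) ^ a * exp 1" by (rule summable_norm_suminf_le_exp_1(2)[OF r_le])
  also have "\<dots> = exp 1 / real n ^ a" by (simp add: power_divide)
  finally show ?thesis .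
qed

theorem lemma2:
  shows "(\<forall>(a::nat) (mu::nat) (n::nat) (u::real).
            2 \<le> a \<and> mu \<le> a - 2 \<longrightarrow> I_tilde a mu n u = I_loop a mu n u)
       \<and> (\<exists>C::real. \<forall>(a::nat) (n::nat) (u::real).
            2 \<le> a \<and> 1 \<le> n \<longrightarrow>
              norm (I_tilde a (a - 1) n u - I_loop a (a - 1) n u) \<le> C / real n ^ a)"
proof (intro conjI exI[of _ "exp 1"] allI impI)
  fix a mu n :: nat and u :: real
  assume "2 \<le> a \<and> mu \<le> a - 2"
  thus "I_tilde a mu n u = I_loop a mu n u" by (intro I_tilde_eq_I_loop) auto
next
  fix a n :: nat and u :: real
  assume "2 \<le> a \<and> 1 \<le> n"
  thus "norm (I_tilde a (a - 1) n u - I_loop a (a - 1) n u) \<le> exp 1 / real n ^ a"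
    by (intro norm_I_tilde_minus_I_loop_le) auto
qed

end
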